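(* Let $O$ be an oracle and, for $y\in\{1,\dots,N\}$, let $A^O_y$ be an $l$-qubit oracular algorithm making $k$ queries to $O$; let $\gamma^y\in\{0,1\}^l$, let $S_0=\mathcal{I}-2|0^l\rangle\langle0^l|$ and $M_{\gamma^y}=\mathcal{I}-2|\gamma^y\rangle\langle\gamma^y|$, and let $G_y=-A^O_yS_0A_y^{O\dagger}M_{\gamma^y}$. Then the operator $$W=\sum_y|y\rangle\langle y|\otimes\sum_{x\in\{0,1\}^m}|x\rangle\langle x|\otimes G_y^x,$$ where $m$ is the size of the middle register and $G_y^x$ denotes $G_y$ applied $x$ times (with $x$ read as an integer), can be implemented using $O(k2^m)$ calls to $O$.
   Context: The oracle $O$ may be used in controlled form; operations not involving $O$ are free for the purpose of counting queries. *)

theory Defs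
  imports "Jordan_Normal_Form.Matrix" "HOL.Complex"
begin

definition adj :: "complex mat \<Rightarrow> complex mat" where
  "adj A = mat (dim_col A) (dim_row A) (\<lambda>(i,j). cnj (A $$ (j,i)))"

definition unitary :: "nat \<Rightarrow> complex mat \<Rightarrow> bool" where
  "unitary n U \<longleftrightarrow> U \<in> carrier_mat n n \<and> adj U * U = 1\<^sub>m n \<and> U * adj U = 1\<^sub>m n"

(* Kronecker (tensor) product; first factor is the more significant index. *)
definition kron :: "complex mat \<Rightarrow> complex mat \<Rightarrow> complex mat" where
  "kron A B = mat (dim_row A * dim_row B) (dim_col A * dim_col B)
     (\<lambda>(i,j). A $$ (i div dim_row B, j div dim_col B) * B $$ (i mod dim_row B, j mod dim_col B))"

definition proj :: "nat \<Rightarrow> nat \<Rightarrow> complex mat" where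
  "proj n j = mat n n (\<lambda>(a,b). if a = j \<and> b = j then 1 else 0)"

definition ket0 :: "nat \<Rightarrow> complex mat" where
  "ket0 n = mat n 1 (\<lambda>(a,b). if a = 0 then 1 else 0)"

definition msum :: "nat \<Rightarrow> complex mat list \<Rightarrow> complex mat" where
  "msum n Ms = foldr (+) Ms (0\<^sub>m n n)"

(* ---------- Oracular algorithm A^Or on l qubits making k queries ----------
   The oracle Or is a unitary on q qubits (q \<le> l); a query applies Or to the
   first q qubits, i.e. the gate  Or \<otimes> I.  The algorithm is
   A^Or = U_k (Or\<otimes>I) U_{k-1} ... (Or\<otimes>I) U_0  with Or-independent unitaries U_i.
   (Queries on other qubits are absorbed into the U_i by wire permutations.) *)
fun alg :: "nat \<Rightarrow> nat \<Rightarrow> (nat \<Rightarrow> complex mat) \<Rightarrow> complex mat \<Rightarrow> nat \<Rightarrow> complex mat" where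
  "alg l q U Or 0 = U 0"
| "alg l q U Or (Suc i) = U (Suc i) * kron Or (1\<^sub>m (2^l div 2^q)) * alg l q U Or i"

(* S_0 = I - 2|0^l><0^l| ,  M_gamma = I - 2|gamma><gamma|  (gamma as index < 2^l) *)
definition S0 :: "nat \<Rightarrow> complex mat" where
  "S0 l = 1\<^sub>m (2^l) - 2 \<cdot>\<^sub>m proj (2^l) 0"

definition Mgam :: "nat \<Rightarrow> nat \<Rightarrow> complex mat" where
  "Mgam l g = 1\<^sub>m (2^l) - 2 \<cdot>\<^sub>m proj (2^l) g"

definition Gop :: "nat \<Rightarrow> complex mat \<Rightarrow> nat \<Rightarrow> complex mat" where
  "Gop l A g = (-1) \<cdot>\<^sub>m (A * S0 l * adj A * Mgam l g)"

(* W = sum_{y=1..N} |y><y| \<otimes> sum_{x<2^m} |x><x| \<otimes> G_y^x ;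
   register state |y> (y in 1..N) is basis index y-1 of an N-dim register. *)
definition Wop :: "nat \<Rightarrow> nat \<Rightarrow> nat \<Rightarrow> (nat \<Rightarrow> complex mat) \<Rightarrow> complex mat" where
  "Wop N m l G = msum (N * 2^m * 2^l)
     (map (\<lambda>y. msum (N * 2^m * 2^l)
        (map (\<lambda>x. kron (proj N (y - 1)) (kron (proj (2^m) x) (G y ^\<^sub>m x))) [0..<2^m])) [1..<N+1])"

(* ---------- Circuits with oracle calls ----------
   An oracle gate on a D-dimensional space is Or or Or^dagger (flag dag) applied to
   the first q qubits, optionally controlled by the most significant qubit (flag ctrl):
     uncontrolled:  Ob \<otimes> I ;   controlled: |0><0| \<otimes> I + |1><1| \<otimes> Ob \<otimes> I. *)
definition qgate :: "nat \<Rightarrow> nat \<Rightarrow> complex mat \<Rightarrow> bool \<times> bool \<Rightarrow> complex mat" where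
  "qgate D q Or f = (let Ob = (if fst f then adj Or else Or) in
     if snd f then kron (proj 2 0) (1\<^sub>m (D div 2)) + kron (proj 2 1) (kron Ob (1\<^sub>m (D div (2 * 2^q))))
     else kron Ob (1\<^sub>m (D div 2^q)))"

fun circ :: "nat \<Rightarrow> nat \<Rightarrow> (nat \<Rightarrow> complex mat) \<Rightarrow> (nat \<Rightarrow> bool \<times> bool) \<Rightarrow> complex mat \<Rightarrow> nat \<Rightarrow> complex mat" where
  "circ D q V Q Or 0 = V 0"
| "circ D q V Q Or (Suc i) = V (Suc i) * qgate D q Or (Q (Suc i)) * circ D q V Q Or i"

end

theory Submission
  imports Defs "Jordan_Normal_Form.Determinant"
begin

(* Index the register |y>|x>|z> by the block number c = (y - 1) 2^m + x and the position z in the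
   last l qubits; then W is block diagonal with blocks G_y^x. A single word of 2^m rounds of 2k
   queries produces all blocks at once: in round j, block c applies A_y, then -S_0 or I, then
   A_y^dagger, then M_gamma or I, according to whether j < x, so the round acts as G_y or as
   A_y A_y^dagger = I. As every block makes the same queries, the word is an ordinary circuit: an
   oracle call on the leading q qubits of the whole register becomes the same call on the leading
   q qubits of z in every block after a fixed permutation of the basis. This gives C = 2, without
   ancillas or controlled queries. *)

lemma sum_lessThan_mult:
  fixes f :: "nat \<Rightarrow> 'a :: comm_monoid_add"
  shows "(\<Sum>s<a * b. f s) = (\<Sum>u<a. \<Sum>v<b. f (u * b + v))"
  by (simp add: sum.nat_group[symmetric] sum.shift_bounds_nat_ivl[of f 0, simplified] atLeast0LessThan
      add.commute)

lemma mixed_radix_less: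
  fixes u v a b :: nat
  assumes "u < a" "v < b"
  shows "u * b + v < a * b"
proof -
  have "u * b + v < (u + 1) * b" using assms by simp
  also have "\<dots> \<le> a * b" using assms by (intro mult_le_mono1) simp
  finally show ?thesis .
qed

lemma mixed_radix_eq_iff:
  fixes a u v b :: nat
  assumes "v < b"
  shows "a = u * b + v \<longleftrightarrow> a div b = u \<and> a mod b = v"
  using assms by auto

lemma mixed_radix_inject:
  fixes u v u' v' b :: nat
  assumes "v < b" "v' < b"
  shows "u * b + v = u' * b + v' \<longleftrightarrow> u = u' \<and> v = v'"
  using assms by (metis mixed_radix_eq_iff)

lemma div_mod_eq_iff:
  fixes i j b :: nat
  shows "i = j \<longleftrightarrow> i div b = j div b \<and> i mod b = j mod b"
  by (metis div_mult_mod_eq)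

subsection \<open>Adjoint and unitary matrices\<close>

lemma index_mult_mat_sum:
  assumes "A \<in> carrier_mat n p" "B \<in> carrier_mat p r" "i < n" "j < r"
  shows "(A * B) $$ (i, j) = (\<Sum>s<p. A $$ (i, s) * B $$ (s, j))"
  using assms by (simp add: scalar_prod_def atLeast0LessThan)

lemma mult_carrier_mat_square [simp]:
  "A \<in> carrier_mat n n \<Longrightarrow> B \<in> carrier_mat n n \<Longrightarrow> A * B \<in> carrier_mat n n"
  by (rule mult_carrier_mat)

lemma dim_adj [simp]: "dim_row (adj A) = dim_col A" "dim_col (adj A) = dim_row A"
  by (auto simp: adj_def)

lemma adj_carrier_mat [simp]: "A \<in> carrier_mat n m \<Longrightarrow> adj A \<in> carrier_mat m n"
  unfolding carrier_mat_def by simp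

lemma index_adj [simp]: "i < dim_col A \<Longrightarrow> j < dim_row A \<Longrightarrow> adj A $$ (i, j) = cnj (A $$ (j, i))"
  by (auto simp: adj_def)

lemma adj_adj [simp]: "adj (adj A) = A"
  by (rule eq_matI) auto

lemma adj_one [simp]: "adj (1\<^sub>m n) = 1\<^sub>m n"
  by (rule eq_matI) auto

lemma adj_mult:
  assumes A: "A \<in> carrier_mat n p" and B: "B \<in> carrier_mat p r"
  shows "adj (A * B) = adj B * adj A"
proof (rule eq_matI)
  fix i j assume "i < dim_row (adj B * adj A)" "j < dim_col (adj B * adj A)"
  then have ij: "i < r" "j < n" using A B by auto
  have "adj (A * B) $$ (i, j) = cnj ((A * B) $$ (j, i))"
    using ij A B by simp
  also have "\<dots> = (\<Sum>s<p. cnj (A $$ (j, s)) * cnj (B $$ (s, i)))"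
    using ij by (simp add: index_mult_mat_sum[OF A B] cnj_sum)
  also have "\<dots> = (adj B * adj A) $$ (i, j)"
    using ij A B by (subst index_mult_mat_sum[of _ r p _ n]) (auto simp: mult.commute)
  finally show "adj (A * B) $$ (i, j) = (adj B * adj A) $$ (i, j)" .
qed (use A B in auto)

lemma adj_mat_diag: "adj (mat_diag n d) = mat_diag n (\<lambda>i. cnj (d i))"
  by (rule eq_matI) (auto simp: mat_diag_def)

lemma unitary_carrier_mat: "unitary n U \<Longrightarrow> U \<in> carrier_mat n n"
  by (simp add: unitary_def)

lemma unitaryI:
  assumes "U \<in> carrier_mat n n" "adj U * U = 1\<^sub>m n"
  shows "unitary n U"
  using assms mat_mult_left_right_inverse[of "adj U" n U] unfolding unitary_def by auto

lemma unitary_one: "unitary n (1\<^sub>m n)"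
  by (simp add: unitary_def)

lemma unitary_adj: "unitary n U \<Longrightarrow> unitary n (adj U)"
  by (auto simp: unitary_def)

lemma unitary_mult:
  assumes U: "unitary n U" and V: "unitary n V"
  shows "unitary n (U * V)"
proof (rule unitaryI)
  have c: "U \<in> carrier_mat n n" "V \<in> carrier_mat n n"
    using U V unitary_carrier_mat by auto
  then show "U * V \<in> carrier_mat n n" by simp
  have "adj (U * V) * (U * V) = adj V * ((adj U * U) * V)"
    using c by (simp add: adj_mult assoc_mult_mat[of _ n n _ n _ n])
  then show "adj (U * V) * (U * V) = 1\<^sub>m n"
    using U V c by (simp add: unitary_def)
qed

lemma unitary_mat_diag:
  assumes "\<And>i. i < n \<Longrightarrow> cnj (d i) * d i = 1"
  shows "unitary n (mat_diag n d)"
proof (rule unitaryI)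
  have "mat_diag n (\<lambda>i. cnj (d i) * d i) = mat_diag n (\<lambda>_. 1)"
    using assms by (intro eq_matI) (auto simp: mat_diag_def)
  then show "adj (mat_diag n d) * mat_diag n d = 1\<^sub>m n"
    by (simp add: adj_mat_diag)
qed simp

lemma unitary_conj_cancel:
  assumes P: "unitary n P" and X: "X \<in> carrier_mat n n"
  shows "adj P * (P * X * adj P) * P = X"
proof -
  have c: "P \<in> carrier_mat n n" "adj P \<in> carrier_mat n n"
    using P unitary_carrier_mat by auto
  have "adj P * (P * X * adj P) * P = (adj P * P) * X * (adj P * P)"
    using c X by (simp add: assoc_mult_mat[of _ n n _ n _ n])
  then show ?thesis
    using P X by (simp add: unitary_def)
qed

lemma unitary_conj_mult:
  assumes P: "unitary n P" and A: "A \<in> carrier_mat n n" and B: "B \<in> carrier_mat n n"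
  shows "(P * A * adj P) * (P * B * adj P) = P * (A * B) * adj P"
proof -
  have c: "P \<in> carrier_mat n n" "adj P \<in> carrier_mat n n"
    using P unitary_carrier_mat by auto
  have "(P * A * adj P) * (P * B * adj P) = P * (A * (adj P * P) * B) * adj P"
    using c A B by (simp add: assoc_mult_mat[of _ n n _ n _ n])
  then show ?thesis
    using P A by (simp add: unitary_def)
qed

lemma Mgam_eq_mat_diag: "Mgam l g = mat_diag (2 ^ l) (\<lambda>i. if i = g then -1 else 1)"
  by (rule eq_matI) (auto simp: mat_diag_def Mgam_def proj_def)

lemma neg_S0_eq_mat_diag: "(-1) \<cdot>\<^sub>m S0 l = mat_diag (2 ^ l) (\<lambda>i. if i = 0 then 1 else -1)"
  by (rule eq_matI) (auto simp: mat_diag_def S0_def proj_def)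

lemma unitary_Mgam: "unitary (2 ^ l) (Mgam l g)"
  unfolding Mgam_eq_mat_diag by (rule unitary_mat_diag) auto

lemma unitary_neg_S0: "unitary (2 ^ l) ((-1) \<cdot>\<^sub>m S0 l)"
  unfolding neg_S0_eq_mat_diag by (rule unitary_mat_diag) auto

lemma Mgam_carrier_mat [simp]: "Mgam l g \<in> carrier_mat (2 ^ l) (2 ^ l)"
  by (simp add: Mgam_eq_mat_diag)

lemma S0_carrier_mat [simp]: "S0 l \<in> carrier_mat (2 ^ l) (2 ^ l)"
  using Mgam_carrier_mat[of l 0] by (simp add: S0_def Mgam_def)

lemma Gop_carrier_mat: "A \<in> carrier_mat (2 ^ l) (2 ^ l) \<Longrightarrow> Gop l A g \<in> carrier_mat (2 ^ l) (2 ^ l)"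
  by (simp add: Gop_def)

subsection \<open>Kronecker products\<close>

lemma dim_kron [simp]:
  "dim_row (kron A B) = dim_row A * dim_row B" "dim_col (kron A B) = dim_col A * dim_col B"
  by (auto simp: kron_def)

lemma kron_carrier_mat [simp]:
  "A \<in> carrier_mat a b \<Longrightarrow> B \<in> carrier_mat c d \<Longrightarrow> kron A B \<in> carrier_mat (a * c) (b * d)"
  unfolding carrier_mat_def by simp

lemma index_kron:
  "i < dim_row A * dim_row B \<Longrightarrow> j < dim_col A * dim_col B \<Longrightarrow>
   kron A B $$ (i, j) = A $$ (i div dim_row B, j div dim_col B) * B $$ (i mod dim_row B, j mod dim_col B)"
  by (simp add: kron_def)

lemma kron_mult:
  assumes A: "A \<in> carrier_mat ar ac" and B: "B \<in> carrier_mat br bc"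
    and C: "C \<in> carrier_mat ac cc" and D: "D \<in> carrier_mat bc dc"
  shows "kron A B * kron C D = kron (A * C) (B * D)"
proof (rule eq_matI)
  fix i j assume "i < dim_row (kron (A * C) (B * D))" "j < dim_col (kron (A * C) (B * D))"
  then have ij: "i < ar * br" "j < cc * dc" using A B C D by auto
  then have "br > 0" "dc > 0" by (auto intro: gr0I)
  with ij have digits: "i div br < ar" "i mod br < br" "j div dc < cc" "j mod dc < dc"
    by (auto simp: less_mult_imp_div_less)
  have "(kron A B * kron C D) $$ (i, j) = (\<Sum>s<ac * bc. kron A B $$ (i, s) * kron C D $$ (s, j))"
    using ij A B C D by (subst index_mult_mat_sum[of _ "ar * br" "ac * bc" _ "cc * dc"]) auto
  also have "\<dots> = (\<Sum>u<ac. \<Sum>v<bc. (A $$ (i div br, u) * C $$ (u, j div dc)) *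
                                    (B $$ (i mod br, v) * D $$ (v, j mod dc)))"
    unfolding sum_lessThan_mult using ij A B C D
    by (intro sum.cong refl) (simp add: index_kron mixed_radix_less mult_ac)
  also have "\<dots> = (A * C) $$ (i div br, j div dc) * (B * D) $$ (i mod br, j mod dc)"
    using digits by (simp add: index_mult_mat_sum[OF A C] index_mult_mat_sum[OF B D] sum_product)
  also have "\<dots> = kron (A * C) (B * D) $$ (i, j)"
    using ij A B C D by (simp add: index_kron)
  finally show "(kron A B * kron C D) $$ (i, j) = kron (A * C) (B * D) $$ (i, j)" .
qed (use A B C D in auto)

lemma adj_kron: "adj (kron A B) = kron (adj A) (adj B)"
proof (rule eq_matI)
  fix i j assume ij: "i < dim_row (kron (adj A) (adj B))" "j < dim_col (kron (adj A) (adj B))"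
  then have "dim_col B > 0" "dim_row B > 0" by (auto intro: gr0I)
  then show "adj (kron A B) $$ (i, j) = kron (adj A) (adj B) $$ (i, j)"
    using ij by (auto simp: index_kron less_mult_imp_div_less)
qed auto

lemma kron_one_one: "kron (1\<^sub>m a) (1\<^sub>m b) = 1\<^sub>m (a * b)"
proof (rule eq_matI)
  fix i j assume "i < dim_row (1\<^sub>m (a * b))" "j < dim_col (1\<^sub>m (a * b))"
  then have ij: "i < a * b" "j < a * b" by auto
  then have "b > 0" by (auto intro: gr0I)
  with ij show "kron (1\<^sub>m a) (1\<^sub>m b) $$ (i, j) = 1\<^sub>m (a * b) $$ (i, j)"
    by (auto simp: index_kron less_mult_imp_div_less div_mod_eq_iff[of i j b])
qed auto

lemma unitary_kron:
  assumes "unitary a A" "unitary b B"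
  shows "unitary (a * b) (kron A B)"
proof (rule unitaryI)
  have c: "A \<in> carrier_mat a a" "B \<in> carrier_mat b b"
    using assms unitary_carrier_mat by auto
  then show "kron A B \<in> carrier_mat (a * b) (a * b)" by simp
  have "adj (kron A B) * kron A B = kron (adj A * A) (adj B * B)"
    using c by (simp add: adj_kron kron_mult[of _ a a _ b b _ a _ b])
  then show "adj (kron A B) * kron A B = 1\<^sub>m (a * b)"
    using assms by (simp add: unitary_def kron_one_one)
qed

lemma kron_ket0_1 [simp]: "kron A (ket0 1) = A"
  by (rule eq_matI) (auto simp: index_kron ket0_def)

subsection \<open>Block-diagonal matrices\<close>

definition block_diag :: "nat \<Rightarrow> nat \<Rightarrow> (nat \<Rightarrow> complex mat) \<Rightarrow> complex mat" where
  "block_diag K L F = mat (K * L) (K * L)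
     (\<lambda>(i, j). if i div L = j div L then F (i div L) $$ (i mod L, j mod L) else 0)"

lemma block_diag_carrier_mat [simp]: "block_diag K L F \<in> carrier_mat (K * L) (K * L)"
  by (simp add: block_diag_def)

lemma dim_block_diag [simp]:
  "dim_row (block_diag K L F) = K * L" "dim_col (block_diag K L F) = K * L"
  by (simp_all add: block_diag_def)

lemma index_block_diag:
  "i < K * L \<Longrightarrow> j < K * L \<Longrightarrow>
   block_diag K L F $$ (i, j) = (if i div L = j div L then F (i div L) $$ (i mod L, j mod L) else 0)"
  by (simp add: block_diag_def)

lemma block_diag_cong: "(\<And>c. c < K \<Longrightarrow> F c = G c) \<Longrightarrow> block_diag K L F = block_diag K L G"
  unfolding block_diag_def by (intro cong_mat refl) (auto simp: less_mult_imp_div_less)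

lemma block_diag_mult:
  assumes F: "\<And>c. c < K \<Longrightarrow> F c \<in> carrier_mat L L" and G: "\<And>c. c < K \<Longrightarrow> G c \<in> carrier_mat L L"
  shows "block_diag K L F * block_diag K L G = block_diag K L (\<lambda>c. F c * G c)"
proof (rule eq_matI)
  fix i j assume "i < dim_row (block_diag K L (\<lambda>c. F c * G c))"
    "j < dim_col (block_diag K L (\<lambda>c. F c * G c))"
  then have ij: "i < K * L" "j < K * L" by auto
  define a where "a = i div L"
  define b where "b = j div L"
  have "L > 0" using ij by (auto intro: gr0I)
  with ij have digits: "a < K" "b < K" "i mod L < L" "j mod L < L"
    by (auto simp: a_def b_def less_mult_imp_div_less)
  have "(block_diag K L F * block_diag K L G) $$ (i, j) =
      (\<Sum>u<K. \<Sum>v<L. block_diag K L F $$ (i, u * L + v) * block_diag K L G $$ (u * L + v, j))"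
    using ij by (subst index_mult_mat_sum[of _ "K * L" "K * L" _ "K * L"]) (simp_all add: sum_lessThan_mult)
  also have "\<dots> = (\<Sum>u<K. if u = a then
      (if a = b then \<Sum>v<L. F a $$ (i mod L, v) * G a $$ (v, j mod L) else 0) else 0)"
  proof (intro sum.cong refl)
    fix u assume "u \<in> {..<K}"
    then show "(\<Sum>v<L. block_diag K L F $$ (i, u * L + v) * block_diag K L G $$ (u * L + v, j)) =
      (if u = a then (if a = b then \<Sum>v<L. F a $$ (i mod L, v) * G a $$ (v, j mod L) else 0) else 0)"
      using ij by (cases "u = a"; cases "a = b")
        (auto simp: index_block_diag mixed_radix_less a_def b_def intro!: sum.neutral sum.cong)
  qed
  also have "\<dots> = block_diag K L (\<lambda>c. F c * G c) $$ (i, j)"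
    using ij digits by (cases "a = b")
      (simp_all add: index_block_diag index_mult_mat_sum[OF F[of b] G[of b]] a_def[symmetric] b_def[symmetric])
  finally show "(block_diag K L F * block_diag K L G) $$ (i, j) = block_diag K L (\<lambda>c. F c * G c) $$ (i, j)" .
qed auto

lemma adj_block_diag:
  assumes F: "\<And>c. c < K \<Longrightarrow> F c \<in> carrier_mat L L"
  shows "adj (block_diag K L F) = block_diag K L (\<lambda>c. adj (F c))"
proof (rule eq_matI)
  fix i j assume "i < dim_row (block_diag K L (\<lambda>c. adj (F c)))"
    "j < dim_col (block_diag K L (\<lambda>c. adj (F c)))"
  then have ij: "i < K * L" "j < K * L" by auto
  then have "L > 0" by (auto intro: gr0I)
  with ij have "j div L < K" "i mod L < L" "j mod L < L"
    by (auto simp: less_mult_imp_div_less)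
  with ij F[of "j div L"]
  show "adj (block_diag K L F) $$ (i, j) = block_diag K L (\<lambda>c. adj (F c)) $$ (i, j)"
    by (auto simp: index_block_diag)
qed auto

lemma block_diag_one: "block_diag K L (\<lambda>_. 1\<^sub>m L) = 1\<^sub>m (K * L)"
proof (rule eq_matI)
  fix i j assume "i < dim_row (1\<^sub>m (K * L))" "j < dim_col (1\<^sub>m (K * L))"
  then have ij: "i < K * L" "j < K * L" by auto
  then have "L > 0" by (auto intro: gr0I)
  with ij show "block_diag K L (\<lambda>_. 1\<^sub>m L) $$ (i, j) = 1\<^sub>m (K * L) $$ (i, j)"
    by (auto simp: index_block_diag div_mod_eq_iff[of i j L])
qed auto

lemma unitary_block_diag:
  assumes F: "\<And>c. c < K \<Longrightarrow> unitary L (F c)"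
  shows "unitary (K * L) (block_diag K L F)"
proof (rule unitaryI)
  have c: "\<And>c. c < K \<Longrightarrow> F c \<in> carrier_mat L L"
    using F unitary_carrier_mat by blast
  have "adj (block_diag K L F) * block_diag K L F = block_diag K L (\<lambda>c. adj (F c) * F c)"
    using c by (simp add: adj_block_diag block_diag_mult)
  also have "\<dots> = block_diag K L (\<lambda>_. 1\<^sub>m L)"
    using F by (intro block_diag_cong) (simp add: unitary_def)
  finally show "adj (block_diag K L F) * block_diag K L F = 1\<^sub>m (K * L)"
    by (simp add: block_diag_one)
qed simp

lemma block_diag_zero: "block_diag K L (\<lambda>_. 0\<^sub>m L L) = 0\<^sub>m (K * L) (K * L)"
proof (rule eq_matI)
  fix i j assume "i < dim_row (0\<^sub>m (K * L) (K * L) :: complex mat)"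
    "j < dim_col (0\<^sub>m (K * L) (K * L) :: complex mat)"
  then have ij: "i < K * L" "j < K * L" by auto
  then have "L > 0" by (auto intro: gr0I)
  with ij show "block_diag K L (\<lambda>_. 0\<^sub>m L L) $$ (i, j) = 0\<^sub>m (K * L) (K * L) $$ (i, j)"
    by (simp add: index_block_diag)
qed auto

lemma block_diag_add:
  assumes F: "\<And>c. c < K \<Longrightarrow> F c \<in> carrier_mat L L" and G: "\<And>c. c < K \<Longrightarrow> G c \<in> carrier_mat L L"
  shows "block_diag K L F + block_diag K L G = block_diag K L (\<lambda>c. F c + G c)"
proof (rule eq_matI)
  fix i j assume "i < dim_row (block_diag K L (\<lambda>c. F c + G c))"
    "j < dim_col (block_diag K L (\<lambda>c. F c + G c))"
  then have ij: "i < K * L" "j < K * L" by auto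
  then have "L > 0" by (auto intro: gr0I)
  with ij have "j div L < K" "i mod L < L" "j mod L < L"
    by (auto simp: less_mult_imp_div_less)
  with ij F[of "j div L"] G[of "j div L"] show "(block_diag K L F + block_diag K L G) $$ (i, j) = block_diag K L (\<lambda>c. F c + G c) $$ (i, j)"
    by (simp add: index_block_diag)
qed auto

subsection \<open>The operator \<open>W\<close> is block diagonal\<close>

lemma msum_carrier_mat: "(\<And>M. M \<in> set Ms \<Longrightarrow> M \<in> carrier_mat n n) \<Longrightarrow> msum n Ms \<in> carrier_mat n n"
  by (induction Ms) (auto simp: msum_def)

lemma msum_Cons: "msum n (M # Ms) = M + msum n Ms"
  by (simp add: msum_def)

lemma msum_single:
  assumes "distinct xs" "A a \<in> carrier_mat n n"
  shows "msum n (map (\<lambda>x. if x = a then A x else 0\<^sub>m n n) xs) = (if a \<in> set xs then A a else 0\<^sub>m n n)"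
  using assms
proof (induction xs)
  case Nil
  then show ?case by (simp add: msum_def)
next
  case (Cons x xs)
  have "msum n (map (\<lambda>x. if x = a then A x else 0\<^sub>m n n) xs) \<in> carrier_mat n n"
    using Cons.prems by (intro msum_carrier_mat) auto
  with Cons show ?case by (auto simp: msum_Cons)
qed

lemma msum_block_diag:
  assumes "\<And>x c. x \<in> set xs \<Longrightarrow> c < K \<Longrightarrow> F x c \<in> carrier_mat L L"
  shows "msum (K * L) (map (\<lambda>x. block_diag K L (F x)) xs) = block_diag K L (\<lambda>c. msum L (map (\<lambda>x. F x c) xs))"
  using assms
proof (induction xs)
  case Nil
  then show ?case by (simp add: msum_def block_diag_zero)
next
  case (Cons x xs)
  have "msum L (map (\<lambda>x. F x c) xs) \<in> carrier_mat L L" if "c < K" for c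
    using Cons.prems that by (intro msum_carrier_mat) auto
  with Cons show ?case by (simp add: msum_Cons block_diag_add)
qed

lemma dim_proj [simp]: "dim_row (proj n j) = n" "dim_col (proj n j) = n"
  by (simp_all add: proj_def)

lemma index_proj: "a < n \<Longrightarrow> b < n \<Longrightarrow> proj n j $$ (a, b) = (if a = j \<and> b = j then 1 else 0)"
  by (simp add: proj_def)

lemma kron_proj_kron_proj:
  assumes v: "v < M" and B: "B \<in> carrier_mat L L"
  shows "kron (proj N u) (kron (proj M v) B) = block_diag (N * M) L (\<lambda>c. if c = u * M + v then B else 0\<^sub>m L L)"
proof (rule eq_matI)
  fix i j assume "i < dim_row (block_diag (N * M) L (\<lambda>c. if c = u * M + v then B else 0\<^sub>m L L))"
    "j < dim_col (block_diag (N * M) L (\<lambda>c. if c = u * M + v then B else 0\<^sub>m L L))"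
  then have ij: "i < N * M * L" "j < N * M * L" by simp_all
  then have "L > 0" "M > 0" by (auto intro: gr0I)
  then have digits: "i div (M * L) = i div L div M" "i mod (M * L) div L = i div L mod M"
      "i mod (M * L) mod L = i mod L" "i div L mod M < M" "i mod L < L" for i
    by (simp_all add: div_mult2_eq mod_mult2_eq mult.commute)
  have blocks: "i div L div M < N" "j div L div M < N"
    using ij by (simp_all add: digits(1)[symmetric] less_mult_imp_div_less mult.assoc)
  have "kron (proj N u) (kron (proj M v) B) $$ (i, j) = proj N u $$ (i div L div M, j div L div M) *
      (proj M v $$ (i div L mod M, j div L mod M) * B $$ (i mod L, j mod L))"
    using ij B \<open>L > 0\<close> \<open>M > 0\<close> by (simp add: index_kron digits mult.assoc)
  then show "kron (proj N u) (kron (proj M v) B) $$ (i, j) =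
      block_diag (N * M) L (\<lambda>c. if c = u * M + v then B else 0\<^sub>m L L) $$ (i, j)"
    using ij B v digits blocks
    by (auto simp: index_block_diag index_proj mixed_radix_eq_iff div_mod_eq_iff[of "i div L" "j div L" M])
qed (use B in \<open>auto simp: proj_def\<close>)

lemma msum_kron_proj_eq_block_diag:
  assumes B: "\<And>x. x < M \<Longrightarrow> B x \<in> carrier_mat L L"
  shows "msum (N * M * L) (map (\<lambda>x. kron (proj N u) (kron (proj M x) (B x))) [0..<M])
    = block_diag (N * M) L (\<lambda>c. if c div M = u then B (c mod M) else 0\<^sub>m L L)"
proof -
  have "map (\<lambda>x. kron (proj N u) (kron (proj M x) (B x))) [0..<M]
      = map (\<lambda>x. block_diag (N * M) L (\<lambda>c. if c = u * M + x then B x else 0\<^sub>m L L)) [0..<M]"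
    using B by (intro map_cong refl) (simp add: kron_proj_kron_proj)
  also have "msum (N * M * L) \<dots>
      = block_diag (N * M) L (\<lambda>c. msum L (map (\<lambda>x. if c = u * M + x then B x else 0\<^sub>m L L) [0..<M]))"
    using B by (intro msum_block_diag) simp
  also have "\<dots> = block_diag (N * M) L (\<lambda>c. if c div M = u then B (c mod M) else 0\<^sub>m L L)"
  proof (rule block_diag_cong)
    fix c assume "c < N * M"
    then have "M > 0" by (auto intro: gr0I)
    have eq: "map (\<lambda>x. if c = u * M + x then B x else 0\<^sub>m L L) [0..<M]
        = map (\<lambda>x. if x = c mod M then (if c div M = u then B (c mod M) else 0\<^sub>m L L) else 0\<^sub>m L L) [0..<M]"
      by (intro map_cong refl) (auto simp: mixed_radix_eq_iff)
    show "msum L (map (\<lambda>x. if c = u * M + x then B x else 0\<^sub>m L L) [0..<M]) =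
        (if c div M = u then B (c mod M) else 0\<^sub>m L L)"
      unfolding eq using msum_single[where xs="[0..<M]" and a="c mod M" and n=L] B[of "c mod M"] \<open>M > 0\<close>
      by simp
  qed
  finally show ?thesis .
qed

lemma Wop_eq_block_diag:
  assumes G: "\<And>y. y \<in> {1..N} \<Longrightarrow> G y \<in> carrier_mat (2 ^ l) (2 ^ l)"
  shows "Wop N m l G = block_diag (N * 2 ^ m) (2 ^ l) (\<lambda>c. G (c div 2 ^ m + 1) ^\<^sub>m (c mod 2 ^ m))"
proof -
  let ?M = "2 ^ m :: nat" and ?L = "2 ^ l :: nat"
  let ?B = "\<lambda>y c. if c div ?M = y - 1 then G y ^\<^sub>m (c mod ?M) else 0\<^sub>m ?L ?L"
  have "msum (N * ?M * ?L) (map (\<lambda>x. kron (proj N (y - 1)) (kron (proj ?M x) (G y ^\<^sub>m x))) [0..<?M])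
      = block_diag (N * ?M) ?L (?B y)" if "y \<in> set [1..<N + 1]" for y
  proof (rule msum_kron_proj_eq_block_diag)
    have "y \<in> {1..N}"
      using that by auto
    then show "G y ^\<^sub>m x \<in> carrier_mat ?L ?L" for x
      using G by simp
  qed
  then have "map (\<lambda>y. msum (N * ?M * ?L) (map (\<lambda>x. kron (proj N (y - 1)) (kron (proj ?M x) (G y ^\<^sub>m x))) [0..<?M])) [1..<N + 1]
      = map (\<lambda>y. block_diag (N * ?M) ?L (?B y)) [1..<N + 1]"
    by (rule map_cong[OF refl])
  then have "Wop N m l G = msum (N * ?M * ?L) (map (\<lambda>y. block_diag (N * ?M) ?L (?B y)) [1..<N + 1])"
    by (simp only: Wop_def)
  also have "\<dots> = block_diag (N * ?M) ?L (\<lambda>c. msum ?L (map (\<lambda>y. ?B y c) [1..<N + 1]))"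
    using G by (intro msum_block_diag) (simp del: upt_Suc)
  also have "\<dots> = block_diag (N * ?M) ?L (\<lambda>c. G (c div ?M + 1) ^\<^sub>m (c mod ?M))"
  proof (rule block_diag_cong)
    fix c assume "c < N * ?M"
    then have y: "c div ?M + 1 \<in> {1..N}"
      by (simp add: less_mult_imp_div_less Suc_leI)
    have eq: "map (\<lambda>y. ?B y c) [1..<N + 1]
        = map (\<lambda>y. if y = c div ?M + 1 then G y ^\<^sub>m (c mod ?M) else 0\<^sub>m ?L ?L) [1..<N + 1]"
      by (intro map_cong refl) auto
    show "msum ?L (map (\<lambda>y. ?B y c) [1..<N + 1]) = G (c div ?M + 1) ^\<^sub>m (c mod ?M)"
      unfolding eq using msum_single[where xs="[1..<N + 1]" and A="\<lambda>y. G y ^\<^sub>m (c mod ?M)"] G[OF y] y by simp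
  qed
  finally show ?thesis .
qed

subsection \<open>Moving the oracle's qubits to the front\<close>

definition perm_mat :: "nat \<Rightarrow> (nat \<Rightarrow> nat) \<Rightarrow> complex mat" where
  "perm_mat D \<pi> = mat D D (\<lambda>(i, j). if i = \<pi> j then 1 else 0)"

lemma perm_mat_carrier_mat [simp]: "perm_mat D \<pi> \<in> carrier_mat D D"
  by (simp add: perm_mat_def)

lemma perm_mat_conj:
  assumes \<pi>: "\<And>i. i < D \<Longrightarrow> \<pi> i < D" and X: "X \<in> carrier_mat D D"
  shows "adj (perm_mat D \<pi>) * X * perm_mat D \<pi> = mat D D (\<lambda>(i, j). X $$ (\<pi> i, \<pi> j))"
proof (rule eq_matI)
  fix i j assume "i < dim_row (mat D D (\<lambda>(i, j). X $$ (\<pi> i, \<pi> j)))"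
    "j < dim_col (mat D D (\<lambda>(i, j). X $$ (\<pi> i, \<pi> j)))"
  then have ij: "i < D" "j < D" by auto
  have "(adj (perm_mat D \<pi>) * X * perm_mat D \<pi>) $$ (i, j) =
      (\<Sum>s<D. (adj (perm_mat D \<pi>) * X) $$ (i, s) * (if s = \<pi> j then 1 else 0))"
    using ij X by (subst index_mult_mat_sum[of _ D D _ D]) (auto simp: perm_mat_def)
  also have "\<dots> = (adj (perm_mat D \<pi>) * X) $$ (i, \<pi> j)"
    using \<pi>[OF ij(2)] by (simp add: if_distrib[of "\<lambda>x. _ * x"] sum.delta' cong: if_cong)
  also have "\<dots> = (\<Sum>s<D. (if s = \<pi> i then 1 else 0) * X $$ (s, \<pi> j))"
    using ij \<pi>[OF ij(2)] X by (subst index_mult_mat_sum[of _ D D _ D]) (auto simp: perm_mat_def intro!: sum.cong)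
  also have "\<dots> = X $$ (\<pi> i, \<pi> j)"
    using \<pi>[OF ij(1)] by (simp add: if_distrib[of "\<lambda>x. x * _"] sum.delta cong: if_cong)
  finally show "(adj (perm_mat D \<pi>) * X * perm_mat D \<pi>) $$ (i, j) = mat D D (\<lambda>(i, j). X $$ (\<pi> i, \<pi> j)) $$ (i, j)"
    using ij by simp
qed (use X in \<open>auto simp: perm_mat_def\<close>)

lemma unitary_perm_mat:
  assumes \<pi>: "\<And>i. i < D \<Longrightarrow> \<pi> i < D" and inj: "inj_on \<pi> {..<D}"
  shows "unitary D (perm_mat D \<pi>)"
proof (rule unitaryI)
  have "adj (perm_mat D \<pi>) * perm_mat D \<pi> = adj (perm_mat D \<pi>) * 1\<^sub>m D * perm_mat D \<pi>"
    by (metis adj_carrier_mat perm_mat_carrier_mat right_mult_one_mat)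
  also have "\<dots> = mat D D (\<lambda>(i, j). 1\<^sub>m D $$ (\<pi> i, \<pi> j))"
    by (rule perm_mat_conj[OF \<pi> one_carrier_mat])
  also have "\<dots> = 1\<^sub>m D"
    using \<pi> inj by (intro eq_matI) (auto dest: inj_onD)
  finally show "adj (perm_mat D \<pi>) * perm_mat D \<pi> = 1\<^sub>m D" .
qed simp

text \<open>Writing \<open>i = (c * R + r) * h + s\<close> with \<open>c < K\<close>, \<open>r < R\<close>, \<open>s < h\<close> and \<open>L = R * h\<close>,
  the index \<open>swap_digits K L h i\<close> is \<open>(r * K + c) * h + s\<close>.\<close>

definition swap_digits :: "nat \<Rightarrow> nat \<Rightarrow> nat \<Rightarrow> nat \<Rightarrow> nat" where
  "swap_digits K L h i = i mod L div h * (K * h) + (i div L * h + i mod h)"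

lemma swap_digits:
  assumes L: "L = R * h" and i: "i < K * L"
  shows "swap_digits K L h i div (K * h) = i mod L div h"
    and "swap_digits K L h i mod (K * h) = i div L * h + i mod h"
    and "swap_digits K L h i < K * L"
proof -
  have "R > 0" "h > 0" using i L by (auto intro: gr0I)
  then have digits: "i div L < K" "i mod h < h" "i mod L div h < R"
    using i L by (auto simp: less_mult_imp_div_less)
  have low: "i div L * h + i mod h < K * h"
    using digits(1,2) by (rule mixed_radix_less)
  then show "swap_digits K L h i div (K * h) = i mod L div h"
    and "swap_digits K L h i mod (K * h) = i div L * h + i mod h"
    using mixed_radix_eq_iff[OF low, of "swap_digits K L h i" "i mod L div h"]
    by (simp_all add: swap_digits_def)
  show "swap_digits K L h i < K * L"
    unfolding swap_digits_def using mixed_radix_less[OF digits(3) low] L by (simp add: ac_simps)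
qed

lemma inj_on_swap_digits:
  assumes L: "L = R * h"
  shows "inj_on (swap_digits K L h) {..<K * L}"
proof (rule inj_onI)
  fix i j assume i: "i \<in> {..<K * L}" and j: "j \<in> {..<K * L}"
    and eq: "swap_digits K L h i = swap_digits K L h j"
  have "h > 0" using i L by (auto intro: gr0I)
  have "i mod L div h = j mod L div h" "i div L * h + i mod h = j div L * h + j mod h"
    using swap_digits(1,2)[OF L] i j eq by (metis lessThan_iff)+
  then have "i mod L div h = j mod L div h" "i mod L mod h = j mod L mod h" "i div L = j div L"
    using \<open>h > 0\<close> L by (simp_all add: mixed_radix_inject mod_mod_cancel)
  then show "i = j"
    by (metis div_mod_eq_iff)
qed

lemma kron_conj_swap_digits:
  assumes Ob: "Ob \<in> carrier_mat R R" and L: "L = R * h"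
  shows "adj (perm_mat (K * L) (swap_digits K L h)) * kron Ob (1\<^sub>m (K * h)) * perm_mat (K * L) (swap_digits K L h)
    = block_diag K L (\<lambda>_. kron Ob (1\<^sub>m h))"
    (is "adj ?P * ?X * ?P = _")
proof -
  have "R * (K * h) = K * L"
    using L by simp
  then have X: "?X \<in> carrier_mat (K * L) (K * L)"
    using kron_carrier_mat[OF Ob one_carrier_mat] by metis
  have "adj ?P * ?X * ?P = mat (K * L) (K * L) (\<lambda>(i, j). ?X $$ (swap_digits K L h i, swap_digits K L h j))"
    using swap_digits(3)[OF L] by (rule perm_mat_conj[OF _ X])
  also have "\<dots> = block_diag K L (\<lambda>_. kron Ob (1\<^sub>m h))"
  proof (rule eq_matI)
    fix i j assume "i < dim_row (block_diag K L (\<lambda>_. kron Ob (1\<^sub>m h)))"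
      "j < dim_col (block_diag K L (\<lambda>_. kron Ob (1\<^sub>m h)))"
    then have ij: "i < K * L" "j < K * L" by auto
    then have "h > 0" "L > 0" using L by (auto intro: gr0I)
    then have digits: "i mod h < h" "j mod h < h" "i mod L < R * h" "j mod L < R * h"
      "i mod L mod h = i mod h" "j mod L mod h = j mod h" "i div L < K" "j div L < K"
      using L ij by (simp_all add: mod_mod_cancel less_mult_imp_div_less)
    then have "i div L * h + i mod h < K * h" "j div L * h + j mod h < K * h"
      by (simp_all add: mixed_radix_less)
    have "swap_digits K L h i < R * (K * h)" "swap_digits K L h j < R * (K * h)"
      using swap_digits(3)[OF L] ij L by (simp_all add: ac_simps)
    then show "mat (K * L) (K * L) (\<lambda>(i, j). ?X $$ (swap_digits K L h i, swap_digits K L h j)) $$ (i, j) =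
        block_diag K L (\<lambda>_. kron Ob (1\<^sub>m h)) $$ (i, j)"
      using ij Ob digits \<open>i div L * h + i mod h < K * h\<close> \<open>j div L * h + j mod h < K * h\<close>
      by (auto simp: index_kron index_block_diag swap_digits(1,2)[OF L] mixed_radix_inject)
  qed (use L in auto)
  finally show ?thesis .
qed

lemma two_power_eq_mult_div:
  assumes "q \<le> l"
  shows "(2::nat) ^ l = 2 ^ q * (2 ^ l div 2 ^ q)"
  using assms by (simp add: power_diff[symmetric] power_add[symmetric])

definition oracle_op :: "nat \<Rightarrow> nat \<Rightarrow> complex mat \<Rightarrow> bool \<Rightarrow> complex mat" where
  "oracle_op l q Or b = kron (if b then adj Or else Or) (1\<^sub>m (2 ^ l div 2 ^ q))"

lemma unitary_oracle_op:
  assumes "q \<le> l" "unitary (2 ^ q) Or"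
  shows "unitary (2 ^ l) (oracle_op l q Or b)"
  using unitary_kron[OF _ unitary_one, of "2 ^ q" "if b then adj Or else Or" "2 ^ l div 2 ^ q"] assms
    two_power_eq_mult_div[OF assms(1)]
  by (simp add: oracle_op_def unitary_adj)

definition oracle_perm :: "nat \<Rightarrow> nat \<Rightarrow> nat \<Rightarrow> complex mat" where
  "oracle_perm K l q = perm_mat (K * 2 ^ l) (swap_digits K (2 ^ l) (2 ^ l div 2 ^ q))"

lemma unitary_oracle_perm: "q \<le> l \<Longrightarrow> unitary (K * 2 ^ l) (oracle_perm K l q)"
  unfolding oracle_perm_def
  using swap_digits(3) inj_on_swap_digits two_power_eq_mult_div
  by (intro unitary_perm_mat) blast+

lemma qgate_uncontrolled_carrier_mat:
  assumes "Or \<in> carrier_mat (2 ^ q) (2 ^ q)" "2 ^ q dvd D" "\<not> snd f"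
  shows "qgate D q Or f \<in> carrier_mat D D"
proof -
  have "kron (if fst f then adj Or else Or) (1\<^sub>m (D div 2 ^ q)) \<in> carrier_mat (2 ^ q * (D div 2 ^ q)) (2 ^ q * (D div 2 ^ q))"
    using assms(1) by (intro kron_carrier_mat) auto
  then show ?thesis
    using assms(2,3) by (simp add: qgate_def)
qed

lemma qgate_eq_conj_oracle_perm:
  assumes ql: "q \<le> l" and Or: "Or \<in> carrier_mat (2 ^ q) (2 ^ q)"
  shows "qgate (K * 2 ^ l) q Or (b, False)
    = oracle_perm K l q * block_diag K (2 ^ l) (\<lambda>_. oracle_op l q Or b) * adj (oracle_perm K l q)"
proof -
  let ?P = "oracle_perm K l q" and ?h = "2 ^ l div 2 ^ q :: nat"
  have L: "2 ^ l = 2 ^ q * ?h"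
    by (rule two_power_eq_mult_div[OF ql])
  have "K * 2 ^ l div 2 ^ q = K * ?h"
    by (subst L) simp
  then have "adj ?P * qgate (K * 2 ^ l) q Or (b, False) * ?P = block_diag K (2 ^ l) (\<lambda>_. oracle_op l q Or b)"
    using kron_conj_swap_digits[OF _ L, of "if b then adj Or else Or" K] Or
    by (simp add: oracle_perm_def qgate_def oracle_op_def)
  moreover have "qgate (K * 2 ^ l) q Or (b, False) \<in> carrier_mat (K * 2 ^ l) (K * 2 ^ l)"
    using le_imp_power_dvd[OF ql] by (intro qgate_uncontrolled_carrier_mat[OF Or] dvd_mult) simp_all
  ultimately show ?thesis
    using unitary_conj_cancel[OF unitary_adj[OF unitary_oracle_perm[OF ql]]] by fastforce
qed

subsection \<open>Words of fixed gates and oracle queries\<close>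

text \<open>\<open>Query b\<close> stands for the oracle gate, or its adjoint if \<open>b\<close> holds. A word denotes the
  product of its gates from left to right, so its last gate acts first.\<close>

datatype 'a gate = Fixed 'a | Query bool

fun eval_word :: "('a gate \<Rightarrow> complex mat) \<Rightarrow> nat \<Rightarrow> 'a gate list \<Rightarrow> complex mat" where
  "eval_word f n [] = 1\<^sub>m n"
| "eval_word f n (g # ws) = f g * eval_word f n ws"

fun num_queries :: "'a gate list \<Rightarrow> nat" where
  "num_queries [] = 0"
| "num_queries (Fixed a # ws) = num_queries ws"
| "num_queries (Query b # ws) = Suc (num_queries ws)"

lemma num_queries_append [simp]: "num_queries (xs @ ys) = num_queries xs + num_queries ys"
  by (induction xs rule: num_queries.induct) auto

lemma num_queries_map_gate [simp]: "num_queries (map (map_gate f) ws) = num_queries ws"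
  by (induction ws rule: num_queries.induct) auto

lemma eval_word_carrier_mat:
  "list_all (\<lambda>g. f g \<in> carrier_mat n n) ws \<Longrightarrow> eval_word f n ws \<in> carrier_mat n n"
  by (induction ws) auto

lemma eval_word_append:
  assumes "list_all (\<lambda>g. f g \<in> carrier_mat n n) xs" "list_all (\<lambda>g. f g \<in> carrier_mat n n) ys"
  shows "eval_word f n (xs @ ys) = eval_word f n xs * eval_word f n ys"
  using assms
proof (induction xs)
  case Nil
  then show ?case using eval_word_carrier_mat[of f n ys] by simp
next
  case (Cons g xs)
  then have "f g \<in> carrier_mat n n" "eval_word f n xs \<in> carrier_mat n n" "eval_word f n ys \<in> carrier_mat n n"
    by (auto intro: eval_word_carrier_mat)
  with Cons show ?case by (simp add: assoc_mult_mat[of _ n n _ n _ n])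
qed

lemma eval_word_conj_block_diag:
  assumes P: "unitary (K * L) P" and Ob: "\<And>b. Ob b \<in> carrier_mat L L"
    and Qg: "\<And>b. Qg b = P * block_diag K L (\<lambda>_. Ob b) * adj P"
    and ws: "list_all (pred_gate (\<lambda>F. \<forall>c<K. F c \<in> carrier_mat L L)) ws"
  shows "eval_word (case_gate (\<lambda>A. A) Qg) (K * L) (map (map_gate (\<lambda>F. P * block_diag K L F * adj P)) ws)
    = P * block_diag K L (\<lambda>c. eval_word (case_gate (\<lambda>F. F c) Ob) L ws) * adj P"
  using ws
proof (induction ws)
  case Nil
  show ?case
    using P unitary_carrier_mat[OF P] by (simp add: block_diag_one unitary_def)
next
  case (Cons g ws)
  have ws_carrier: "eval_word (case_gate (\<lambda>F. F c) Ob) L ws \<in> carrier_mat L L" if "c < K" for c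
    using Cons.prems that Ob
    by (intro eval_word_carrier_mat) (auto simp: list_all_iff gate.pred_set split: gate.split)
  have g_carrier: "case_gate (\<lambda>F. F c) Ob g \<in> carrier_mat L L" if "c < K" for c
    using Cons.prems that Ob by (cases g) auto
  have "case_gate (\<lambda>A. A) Qg (map_gate (\<lambda>F. P * block_diag K L F * adj P) g)
      = P * block_diag K L (\<lambda>c. case_gate (\<lambda>F. F c) Ob g) * adj P"
    by (cases g) (simp_all add: Qg)
  with Cons ws_carrier g_carrier show ?case
    by (simp add: unitary_conj_mult[OF P] block_diag_mult)
qed

subsection \<open>Compiling a word into a circuit\<close>

lemma circ_cong:
  "(\<And>j. j \<le> n \<Longrightarrow> V j = V' j) \<Longrightarrow> (\<And>j. j \<le> n \<Longrightarrow> Q j = Q' j) \<Longrightarrow>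
   circ D q V Q Or n = circ D q V' Q' Or n"
  by (induction n) auto

context
  fixes D q :: nat and Or :: "complex mat" and V :: "nat \<Rightarrow> complex mat" and Q :: "nat \<Rightarrow> bool \<times> bool"
  assumes Or: "Or \<in> carrier_mat (2 ^ q) (2 ^ q)" and dvd: "2 ^ q dvd D"
    and uncontrolled: "\<And>i. \<not> snd (Q i)"
begin

lemma circ_carrier_mat: "(\<And>i. i \<le> n \<Longrightarrow> V i \<in> carrier_mat D D) \<Longrightarrow> circ D q V Q Or n \<in> carrier_mat D D"
  by (induction n) (auto simp: qgate_uncontrolled_carrier_mat[OF Or dvd uncontrolled])

lemma circ_mult_last:
  assumes V: "\<And>i. i \<le> n \<Longrightarrow> V i \<in> carrier_mat D D" and F: "F \<in> carrier_mat D D"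
  shows "circ D q (V(n := F * V n)) Q Or n = F * circ D q V Q Or n"
proof (cases n)
  case (Suc p)
  have "circ D q (V(n := F * V n)) Q Or p = circ D q V Q Or p"
    using Suc by (intro circ_cong) auto
  moreover have "circ D q V Q Or p \<in> carrier_mat D D"
    using V Suc by (intro circ_carrier_mat) auto
  ultimately show ?thesis
    using Suc V[of n] F qgate_uncontrolled_carrier_mat[OF Or dvd uncontrolled]
    by (simp add: assoc_mult_mat[of _ D D _ D _ D])
qed simp

lemma circ_extend:
  assumes "\<And>i. i \<le> n \<Longrightarrow> V i \<in> carrier_mat D D"
  shows "circ D q (V(Suc n := 1\<^sub>m D)) (Q(Suc n := (b, False))) Or (Suc n) = qgate D q Or (b, False) * circ D q V Q Or n"
proof -
  have "circ D q (V(Suc n := 1\<^sub>m D)) (Q(Suc n := (b, False))) Or n = circ D q V Q Or n"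
    by (intro circ_cong) auto
  moreover have "qgate D q Or (b, False) \<in> carrier_mat D D"
    by (simp add: qgate_uncontrolled_carrier_mat[OF Or dvd])
  ultimately show ?thesis by simp
qed

end

definition circuit_gate :: "nat \<Rightarrow> nat \<Rightarrow> complex mat \<Rightarrow> complex mat gate \<Rightarrow> complex mat" where
  "circuit_gate D q Or = case_gate (\<lambda>A. A) (\<lambda>b. qgate D q Or (b, False))"

lemma circuit_gate_simps [simp]:
  "circuit_gate D q Or (Fixed A) = A" "circuit_gate D q Or (Query b) = qgate D q Or (b, False)"
  by (simp_all add: circuit_gate_def)

text \<open>Fixed gates are absorbed into the current \<open>V i\<close>; each query opens a new \<open>V i = 1\<^sub>m D\<close>.\<close>

lemma word_circuit:
  assumes ws: "list_all (pred_gate (unitary D)) ws" and dvd: "2 ^ q dvd D"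
  shows "\<exists>V Q. (\<forall>i\<le>num_queries ws. unitary D (V i)) \<and> (\<forall>i. \<not> snd (Q i)) \<and>
    (\<forall>Or \<in> carrier_mat (2 ^ q) (2 ^ q). circ D q V Q Or (num_queries ws) = eval_word (circuit_gate D q Or) D ws)"
  using ws
proof (induction ws rule: num_queries.induct)
  case 1
  show ?case
    by (rule exI[of _ "\<lambda>_. 1\<^sub>m D"], rule exI[of _ "\<lambda>_. (False, False)"]) (simp add: unitary_one)
next
  case (2 F ws)
  then obtain V Q where V: "\<forall>i\<le>num_queries ws. unitary D (V i)" and Q: "\<forall>i. \<not> snd (Q i)"
    and E: "\<forall>Or \<in> carrier_mat (2 ^ q) (2 ^ q). circ D q V Q Or (num_queries ws) = eval_word (circuit_gate D q Or) D ws"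
    by auto
  have F: "unitary D F" using "2.prems" by simp
  let ?V = "V(num_queries ws := F * V (num_queries ws))"
  have "\<forall>i\<le>num_queries (Fixed F # ws). unitary D (?V i)"
    using V F by (auto intro: unitary_mult)
  moreover have "circ D q ?V Q Or (num_queries (Fixed F # ws)) = eval_word (circuit_gate D q Or) D (Fixed F # ws)"
    if Or: "Or \<in> carrier_mat (2 ^ q) (2 ^ q)" for Or
    using circ_mult_last[OF Or dvd] V F Q E Or by (simp add: unitary_carrier_mat)
  ultimately show ?case using Q by blast
next
  case (3 b ws)
  then obtain V Q where V: "\<forall>i\<le>num_queries ws. unitary D (V i)" and Q: "\<forall>i. \<not> snd (Q i)"
    and E: "\<forall>Or \<in> carrier_mat (2 ^ q) (2 ^ q). circ D q V Q Or (num_queries ws) = eval_word (circuit_gate D q Or) D ws"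
    by auto
  let ?V = "V(Suc (num_queries ws) := 1\<^sub>m D)" and ?Q = "Q(Suc (num_queries ws) := (b, False))"
  have "\<forall>i\<le>num_queries (Query b # ws). unitary D (?V i)"
    using V by (auto simp: unitary_one le_Suc_eq)
  moreover have "\<forall>i. \<not> snd (?Q i)"
    using Q by simp
  moreover have "circ D q ?V ?Q Or (num_queries (Query b # ws)) = eval_word (circuit_gate D q Or) D (Query b # ws)"
    if Or: "Or \<in> carrier_mat (2 ^ q) (2 ^ q)" for Or
    using circ_extend[OF Or dvd] V Q E Or by (simp add: unitary_carrier_mat)
  ultimately show ?case by blast
qed

subsection \<open>A word for the powers of \<open>G\<close>, one block at a time\<close>

definition block_gate :: "nat \<Rightarrow> nat \<Rightarrow> complex mat \<Rightarrow> nat \<Rightarrow> (nat \<Rightarrow> complex mat) gate \<Rightarrow> complex mat" where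
  "block_gate l q Or c = case_gate (\<lambda>F. F c) (oracle_op l q Or)"

lemma block_gate_simps [simp]:
  "block_gate l q Or c (Fixed F) = F c" "block_gate l q Or c (Query b) = oracle_op l q Or b"
  by (simp_all add: block_gate_def)

lemma oracle_op_adj: "oracle_op l q Or True = adj (oracle_op l q Or False)"
  by (simp add: oracle_op_def adj_kron)

lemma alg_Suc_oracle_op: "alg l q u Or (Suc i) = u (Suc i) * oracle_op l q Or False * alg l q u Or i"
  by (simp add: oracle_op_def)

lemma unitary_alg:
  assumes "q \<le> l" "unitary (2 ^ q) Or" "\<And>i. i \<le> k \<Longrightarrow> unitary (2 ^ l) (u i)" "i \<le> k"
  shows "unitary (2 ^ l) (alg l q u Or i)"
  using assms(4)
  by (induction i) (auto simp del: alg.simps(2) simp: alg_Suc_oracle_op assms unitary_oracle_op intro!: unitary_mult)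

lemma unitary_block_gate:
  assumes "q \<le> l" "unitary (2 ^ q) Or" "pred_gate (\<lambda>F. \<forall>c\<in>C. unitary (2 ^ l) (F c)) g" "c \<in> C"
  shows "unitary (2 ^ l) (block_gate l q Or c g)"
  using assms by (cases g) (auto simp: block_gate_def unitary_oracle_op)

type_synonym block_word = "(nat \<Rightarrow> complex mat) gate list"

fun alg_word :: "(nat \<Rightarrow> nat \<Rightarrow> complex mat) \<Rightarrow> nat \<Rightarrow> block_word" where
  "alg_word u 0 = [Fixed (\<lambda>c. u c 0)]"
| "alg_word u (Suc i) = Fixed (\<lambda>c. u c (Suc i)) # Query False # alg_word u i"

fun alg_adj_word :: "(nat \<Rightarrow> nat \<Rightarrow> complex mat) \<Rightarrow> nat \<Rightarrow> block_word" where
  "alg_adj_word u 0 = [Fixed (\<lambda>c. adj (u c 0))]"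
| "alg_adj_word u (Suc i) = alg_adj_word u i @ [Query True, Fixed (\<lambda>c. adj (u c (Suc i)))]"

definition grover_step_word ::
    "nat \<Rightarrow> (nat \<Rightarrow> nat \<Rightarrow> complex mat) \<Rightarrow> (nat \<Rightarrow> nat) \<Rightarrow> (nat \<Rightarrow> nat) \<Rightarrow> nat \<Rightarrow> nat \<Rightarrow> block_word" where
  "grover_step_word l u \<gamma> x k j = alg_word u k @
     Fixed (\<lambda>c. if j < x c then (-1) \<cdot>\<^sub>m S0 l else 1\<^sub>m (2 ^ l)) # alg_adj_word u k @
     [Fixed (\<lambda>c. if j < x c then Mgam l (\<gamma> c) else 1\<^sub>m (2 ^ l))]"

fun grover_power_word ::
    "nat \<Rightarrow> (nat \<Rightarrow> nat \<Rightarrow> complex mat) \<Rightarrow> (nat \<Rightarrow> nat) \<Rightarrow> (nat \<Rightarrow> nat) \<Rightarrow> nat \<Rightarrow> nat \<Rightarrow> block_word" where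
  "grover_power_word l u \<gamma> x k 0 = []"
| "grover_power_word l u \<gamma> x k (Suc n) = grover_power_word l u \<gamma> x k n @ grover_step_word l u \<gamma> x k n"

lemma num_queries_grover_power_word: "num_queries (grover_power_word l u \<gamma> x k n) = n * (2 * k)"
proof -
  have "num_queries (alg_word u i) = i" "num_queries (alg_adj_word u i) = i" for i
    by (induction i) auto
  then show ?thesis
    by (induction n) (simp_all add: grover_step_word_def)
qed

lemma alg_word_unitary:
  assumes "\<And>c i. c \<in> C \<Longrightarrow> i \<le> k \<Longrightarrow> unitary (2 ^ l) (u c i)" "i \<le> k"
  shows "list_all (pred_gate (\<lambda>F. \<forall>c\<in>C. unitary (2 ^ l) (F c))) (alg_word u i)"
  using assms(2) by (induction i) (auto simp: assms(1))

lemma alg_adj_word_unitary: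
  assumes "\<And>c i. c \<in> C \<Longrightarrow> i \<le> k \<Longrightarrow> unitary (2 ^ l) (u c i)" "i \<le> k"
  shows "list_all (pred_gate (\<lambda>F. \<forall>c\<in>C. unitary (2 ^ l) (F c))) (alg_adj_word u i)"
  using assms(2) by (induction i) (auto simp: assms(1) unitary_adj)

lemma grover_power_word_unitary:
  assumes "\<And>c i. c \<in> C \<Longrightarrow> i \<le> k \<Longrightarrow> unitary (2 ^ l) (u c i)"
  shows "list_all (pred_gate (\<lambda>F. \<forall>c\<in>C. unitary (2 ^ l) (F c))) (grover_power_word l u \<gamma> x k n)"
  by (induction n) (auto simp: grover_step_word_def unitary_neg_S0 unitary_Mgam unitary_one
      alg_word_unitary[OF assms] alg_adj_word_unitary[OF assms])

context
  fixes l q k c :: nat and Or :: "complex mat" and u :: "nat \<Rightarrow> nat \<Rightarrow> complex mat"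
  assumes ql: "q \<le> l" and Or: "unitary (2 ^ q) Or" and u: "\<And>i. i \<le> k \<Longrightarrow> unitary (2 ^ l) (u c i)"
begin

lemma unitary_alg_at_block: "i \<le> k \<Longrightarrow> unitary (2 ^ l) (alg l q (u c) Or i)"
  by (rule unitary_alg[OF ql Or]) (use u in auto)

lemma carrier_at_block:
  shows "i \<le> k \<Longrightarrow> u c i \<in> carrier_mat (2 ^ l) (2 ^ l)"
    and "oracle_op l q Or b \<in> carrier_mat (2 ^ l) (2 ^ l)"
    and "i \<le> k \<Longrightarrow> alg l q (u c) Or i \<in> carrier_mat (2 ^ l) (2 ^ l)"
  using unitary_carrier_mat[OF u] unitary_carrier_mat[OF unitary_oracle_op[OF ql Or]]
    unitary_carrier_mat[OF unitary_alg_at_block] by auto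

lemma block_gate_carrier_mat:
  assumes "list_all (pred_gate (\<lambda>F. \<forall>c\<in>{c}. unitary (2 ^ l) (F c))) ws"
  shows "list_all (\<lambda>g. block_gate l q Or c g \<in> carrier_mat (2 ^ l) (2 ^ l)) ws"
  using assms by (rule list.pred_mono_strong) (metis singletonI unitary_block_gate[OF ql Or] unitary_carrier_mat)

lemma words_carrier_at_block:
  shows "i \<le> k \<Longrightarrow> list_all (\<lambda>g. block_gate l q Or c g \<in> carrier_mat (2 ^ l) (2 ^ l)) (alg_word u i)"
    and "i \<le> k \<Longrightarrow> list_all (\<lambda>g. block_gate l q Or c g \<in> carrier_mat (2 ^ l) (2 ^ l)) (alg_adj_word u i)"
    and "list_all (\<lambda>g. block_gate l q Or c g \<in> carrier_mat (2 ^ l) (2 ^ l)) (grover_power_word l u \<gamma> x k n)"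
    and "list_all (\<lambda>g. block_gate l q Or c g \<in> carrier_mat (2 ^ l) (2 ^ l)) (grover_step_word l u \<gamma> x k j)"
proof -
  have u': "\<And>c' i. c' \<in> {c} \<Longrightarrow> i \<le> k \<Longrightarrow> unitary (2 ^ l) (u c' i)"
    using u by blast
  show "i \<le> k \<Longrightarrow> list_all (\<lambda>g. block_gate l q Or c g \<in> carrier_mat (2 ^ l) (2 ^ l)) (alg_word u i)"
    by (rule block_gate_carrier_mat, rule alg_word_unitary[OF u'])
  show "i \<le> k \<Longrightarrow> list_all (\<lambda>g. block_gate l q Or c g \<in> carrier_mat (2 ^ l) (2 ^ l)) (alg_adj_word u i)"
    by (rule block_gate_carrier_mat, rule alg_adj_word_unitary[OF u'])
  show power: "list_all (\<lambda>g. block_gate l q Or c g \<in> carrier_mat (2 ^ l) (2 ^ l)) (grover_power_word l u \<gamma> x k n)"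
    for n by (rule block_gate_carrier_mat, rule grover_power_word_unitary[OF u'])
  show "list_all (\<lambda>g. block_gate l q Or c g \<in> carrier_mat (2 ^ l) (2 ^ l)) (grover_step_word l u \<gamma> x k j)"
    using power[of "Suc j"] by simp
qed

lemma eval_alg_word: "i \<le> k \<Longrightarrow> eval_word (block_gate l q Or c) (2 ^ l) (alg_word u i) = alg l q (u c) Or i"
proof (induction i)
  case (Suc i)
  then show ?case
    using carrier_at_block(1)[where i="Suc i"] carrier_at_block(2) carrier_at_block(3)[where i=i]
    by (simp del: alg.simps(2) add: alg_Suc_oracle_op assoc_mult_mat[of _ "2 ^ l" "2 ^ l" _ "2 ^ l" _ "2 ^ l"])
qed (simp add: right_mult_one_mat[OF carrier_at_block(1)[OF le0]])

lemma eval_alg_adj_word: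
  "i \<le> k \<Longrightarrow> eval_word (block_gate l q Or c) (2 ^ l) (alg_adj_word u i) = adj (alg l q (u c) Or i)"
proof (induction i)
  case (Suc i)
  have "eval_word (block_gate l q Or c) (2 ^ l) (alg_adj_word u (Suc i)) =
      adj (alg l q (u c) Or i) * (adj (oracle_op l q Or False) * adj (u c (Suc i)))"
    using Suc words_carrier_at_block(2)[where i=i] carrier_at_block(1)[where i="Suc i"] carrier_at_block(2)
    by (simp add: eval_word_append oracle_op_adj)
  also have "\<dots> = adj (alg l q (u c) Or (Suc i))"
    using Suc.prems carrier_at_block(1)[where i="Suc i"] carrier_at_block(2) carrier_at_block(3)[where i=i]
    by (simp del: alg.simps(2) add: alg_Suc_oracle_op adj_mult[of _ "2 ^ l" "2 ^ l" _ "2 ^ l"]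
        assoc_mult_mat[of _ "2 ^ l" "2 ^ l" _ "2 ^ l" _ "2 ^ l"])
  finally show ?case .
qed (simp add: right_mult_one_mat[OF adj_carrier_mat[OF carrier_at_block(1)[OF le0]]])

lemma eval_grover_step_word:
  "eval_word (block_gate l q Or c) (2 ^ l) (grover_step_word l u \<gamma> x k j)
    = (if j < x c then Gop l (alg l q (u c) Or k) (\<gamma> c) else 1\<^sub>m (2 ^ l))"
proof -
  let ?A = "alg l q (u c) Or k"
  have A: "?A \<in> carrier_mat (2 ^ l) (2 ^ l)" "adj ?A \<in> carrier_mat (2 ^ l) (2 ^ l)"
    using carrier_at_block(3)[where i=k] by auto
  have "eval_word (block_gate l q Or c) (2 ^ l) (grover_step_word l u \<gamma> x k j) =
      ?A * ((if j < x c then (-1) \<cdot>\<^sub>m S0 l else 1\<^sub>m (2 ^ l)) *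
        (adj ?A * (if j < x c then Mgam l (\<gamma> c) else 1\<^sub>m (2 ^ l))))"
    using words_carrier_at_block(1,2)[where i=k] A right_mult_one_mat[OF Mgam_carrier_mat]
    by (simp add: grover_step_word_def eval_word_append eval_alg_word eval_alg_adj_word)
  also have "\<dots> = (if j < x c then Gop l ?A (\<gamma> c) else 1\<^sub>m (2 ^ l))"
  proof (cases "j < x c")
    case True
    have X: "S0 l * (adj ?A * Mgam l (\<gamma> c)) \<in> carrier_mat (2 ^ l) (2 ^ l)"
      using A by simp
    have "(-1) \<cdot>\<^sub>m S0 l * (adj ?A * Mgam l (\<gamma> c)) = (-1) \<cdot>\<^sub>m (S0 l * (adj ?A * Mgam l (\<gamma> c)))"
      using A by (intro mult_smult_assoc_mat[OF S0_carrier_mat, where nc="2 ^ l"]) simp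
    then have "?A * ((-1) \<cdot>\<^sub>m S0 l * (adj ?A * Mgam l (\<gamma> c))) = (-1) \<cdot>\<^sub>m (?A * (S0 l * (adj ?A * Mgam l (\<gamma> c))))"
      using mult_smult_distrib[OF A(1) X] by simp
    with True A show ?thesis
      by (simp add: Gop_def assoc_mult_mat[of _ "2 ^ l" "2 ^ l" _ "2 ^ l" _ "2 ^ l"])
  next
    case False
    with A unitary_alg_at_block[of k] show ?thesis
      by (simp add: unitary_def)
  qed
  finally show ?thesis .
qed

lemma eval_grover_power_word:
  "eval_word (block_gate l q Or c) (2 ^ l) (grover_power_word l u \<gamma> x k n)
    = Gop l (alg l q (u c) Or k) (\<gamma> c) ^\<^sub>m min (x c) n"
proof -
  let ?G = "Gop l (alg l q (u c) Or k) (\<gamma> c)"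
  have G: "?G \<in> carrier_mat (2 ^ l) (2 ^ l)"
    using carrier_at_block(3)[where i=k] by (simp add: Gop_carrier_mat)
  show ?thesis
  proof (induction n)
    case 0
    show ?case using G by simp
  next
    case (Suc n)
    have "eval_word (block_gate l q Or c) (2 ^ l) (grover_power_word l u \<gamma> x k (Suc n)) =
        ?G ^\<^sub>m min (x c) n * (if n < x c then ?G else 1\<^sub>m (2 ^ l))"
      using Suc words_carrier_at_block(3,4) by (simp add: eval_word_append eval_grover_step_word)
    moreover have "min (x c) (Suc n) = (if n < x c then Suc n else x c)"
      "min (x c) n = (if n < x c then n else x c)"
      by auto
    ultimately show ?case
      using G by (cases "n < x c") simp_all
  qed
qed

end

subsection \<open>Block-diagonal words as circuits\<close>

lemma circuit_gate_carrier_mat: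
  assumes "Or \<in> carrier_mat (2 ^ q) (2 ^ q)" "2 ^ q dvd D" "list_all (pred_gate (unitary D)) ws"
  shows "list_all (\<lambda>g. circuit_gate D q Or g \<in> carrier_mat D D) ws"
  using assms(3)
proof (rule list.pred_mono_strong)
  fix g assume "pred_gate (unitary D) g"
  then show "circuit_gate D q Or g \<in> carrier_mat D D"
    using qgate_uncontrolled_carrier_mat[OF assms(1,2)] unitary_carrier_mat
    by (cases g) auto
qed

lemma conj_block_diag_word_unitary:
  assumes P: "unitary (K * L) P" and ws: "list_all (pred_gate (\<lambda>F. \<forall>c\<in>{..<K}. unitary L (F c))) ws"
  shows "list_all (pred_gate (unitary (K * L))) (map (map_gate (\<lambda>F. P * block_diag K L F * adj P)) ws)"
  unfolding list.pred_map using ws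
proof (rule list.pred_mono_strong)
  fix g assume "pred_gate (\<lambda>F. \<forall>c\<in>{..<K}. unitary L (F c)) g"
  then show "(pred_gate (unitary (K * L)) \<circ> map_gate (\<lambda>F. P * block_diag K L F * adj P)) g"
    by (cases g) (auto intro!: unitary_mult unitary_block_diag P unitary_adj[OF P])
qed

lemma block_word_circuit:
  assumes ql: "q \<le> l" and ws: "list_all (pred_gate (\<lambda>F. \<forall>c\<in>{..<K}. unitary (2 ^ l) (F c))) ws"
  shows "\<exists>V Q. (\<forall>i\<le>num_queries ws. unitary (K * 2 ^ l) (V i)) \<and> (\<forall>i. \<not> snd (Q i)) \<and>
    (\<forall>Or. unitary (2 ^ q) Or \<longrightarrow>
      circ (K * 2 ^ l) q V Q Or (num_queries ws) = block_diag K (2 ^ l) (\<lambda>c. eval_word (block_gate l q Or c) (2 ^ l) ws))"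
proof -
  let ?D = "K * 2 ^ l" and ?P = "oracle_perm K l q"
  have P: "unitary ?D ?P"
    using ql by (rule unitary_oracle_perm)
  define conj_ws where "conj_ws = map (map_gate (\<lambda>F. ?P * block_diag K (2 ^ l) F * adj ?P)) ws"
  have conj_ws: "list_all (pred_gate (unitary ?D)) conj_ws"
    unfolding conj_ws_def using P ws by (rule conj_block_diag_word_unitary)
  have dvd: "2 ^ q dvd ?D"
    using le_imp_power_dvd[OF ql] by (rule dvd_mult)
  have "list_all (pred_gate (unitary ?D)) (Fixed (adj ?P) # conj_ws @ [Fixed ?P])"
    using conj_ws P unitary_adj[OF P] by simp
  moreover have "num_queries (Fixed (adj ?P) # conj_ws @ [Fixed ?P]) = num_queries ws"
    by (simp add: conj_ws_def)
  ultimately obtain V Q where V: "\<forall>i\<le>num_queries ws. unitary ?D (V i)" and Q: "\<forall>i. \<not> snd (Q i)"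
    and circ: "\<forall>Or \<in> carrier_mat (2 ^ q) (2 ^ q). circ ?D q V Q Or (num_queries ws) =
      eval_word (circuit_gate ?D q Or) ?D (Fixed (adj ?P) # conj_ws @ [Fixed ?P])"
    using word_circuit[OF _ dvd] by metis
  have "circ ?D q V Q Or (num_queries ws) = block_diag K (2 ^ l) (\<lambda>c. eval_word (block_gate l q Or c) (2 ^ l) ws)"
    (is "_ = ?B") if Or: "unitary (2 ^ q) Or" for Or
  proof -
    have Or_carrier: "Or \<in> carrier_mat (2 ^ q) (2 ^ q)"
      using Or by (rule unitary_carrier_mat)
    have "eval_word (circuit_gate ?D q Or) ?D conj_ws = ?P * ?B * adj ?P"
      unfolding conj_ws_def circuit_gate_def block_gate_def
    proof (rule eval_word_conj_block_diag[OF P _ qgate_eq_conj_oracle_perm[OF ql Or_carrier]])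
      show "oracle_op l q Or b \<in> carrier_mat (2 ^ l) (2 ^ l)" for b
        using unitary_oracle_op[OF ql Or] by (rule unitary_carrier_mat)
      show "list_all (pred_gate (\<lambda>F. \<forall>c<K. F c \<in> carrier_mat (2 ^ l) (2 ^ l))) ws"
        using ws by (rule list.pred_mono_strong) (auto simp: gate.pred_set unitary_carrier_mat)
    qed
    then have "eval_word (circuit_gate ?D q Or) ?D (Fixed (adj ?P) # conj_ws @ [Fixed ?P]) = adj ?P * (?P * ?B * adj ?P) * ?P"
      using circuit_gate_carrier_mat[OF Or_carrier dvd conj_ws] unitary_carrier_mat[OF P]
      by (simp add: eval_word_append assoc_mult_mat[of "adj ?P" ?D ?D _ ?D _ ?D])
    then show ?thesis
      using circ Or_carrier unitary_conj_cancel[OF P] by simp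
  qed
  with V Q show ?thesis by blast
qed

subsection \<open>The circuit for \<open>W\<close>\<close>

lemma Wop_eq_block_diag_eval:
  assumes ql: "q \<le> l" and Or: "unitary (2 ^ q) Or"
    and U: "\<And>y i. y \<in> {1..N} \<Longrightarrow> i \<le> k \<Longrightarrow> unitary (2 ^ l) (U y i)"
  shows "Wop N m l (\<lambda>y. Gop l (alg l q (U y) Or k) (\<gamma> y)) = block_diag (N * 2 ^ m) (2 ^ l)
    (\<lambda>c. eval_word (block_gate l q Or c) (2 ^ l)
      (grover_power_word l (\<lambda>c. U (c div 2 ^ m + 1)) (\<lambda>c. \<gamma> (c div 2 ^ m + 1)) (\<lambda>c. c mod 2 ^ m) k (2 ^ m)))"
proof -
  have "Wop N m l (\<lambda>y. Gop l (alg l q (U y) Or k) (\<gamma> y)) = block_diag (N * 2 ^ m) (2 ^ l)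
      (\<lambda>c. Gop l (alg l q (U (c div 2 ^ m + 1)) Or k) (\<gamma> (c div 2 ^ m + 1)) ^\<^sub>m (c mod 2 ^ m))"
  proof (intro Wop_eq_block_diag Gop_carrier_mat unitary_carrier_mat)
    show "unitary (2 ^ l) (alg l q (U y) Or k)" if "y \<in> {1..N}" for y
      by (rule unitary_alg[OF ql Or _ order_refl]) (use U that in auto)
  qed
  also have "\<dots> = block_diag (N * 2 ^ m) (2 ^ l) (\<lambda>c. eval_word (block_gate l q Or c) (2 ^ l)
      (grover_power_word l (\<lambda>c. U (c div 2 ^ m + 1)) (\<lambda>c. \<gamma> (c div 2 ^ m + 1)) (\<lambda>c. c mod 2 ^ m) k (2 ^ m)))"
  proof (rule block_diag_cong)
    fix c assume "c < N * 2 ^ m"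
    then have "c div 2 ^ m + 1 \<in> {1..N}"
      by (simp add: less_mult_imp_div_less Suc_leI)
    then show "Gop l (alg l q (U (c div 2 ^ m + 1)) Or k) (\<gamma> (c div 2 ^ m + 1)) ^\<^sub>m (c mod 2 ^ m) =
        eval_word (block_gate l q Or c) (2 ^ l)
          (grover_power_word l (\<lambda>c. U (c div 2 ^ m + 1)) (\<lambda>c. \<gamma> (c div 2 ^ m + 1)) (\<lambda>c. c mod 2 ^ m) k (2 ^ m))"
      using eval_grover_power_word[where u="\<lambda>c. U (c div 2 ^ m + 1)" and c=c, OF ql Or] U by simp
  qed
  finally show ?thesis .
qed

lemma Wop_circuit:
  assumes ql: "q \<le> l" and U: "\<And>y i. y \<in> {1..N} \<Longrightarrow> i \<le> k \<Longrightarrow> unitary (2 ^ l) (U y i)"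
  shows "\<exists>V Q. (\<forall>i\<le>2 * k * 2 ^ m. unitary (N * 2 ^ m * 2 ^ l) (V i)) \<and> (\<forall>i. \<not> snd (Q i)) \<and>
    (\<forall>Or. unitary (2 ^ q) Or \<longrightarrow>
      circ (N * 2 ^ m * 2 ^ l) q V Q Or (2 * k * 2 ^ m) = Wop N m l (\<lambda>y. Gop l (alg l q (U y) Or k) (\<gamma> y)))"
proof -
  define ws where "ws = grover_power_word l (\<lambda>c. U (c div 2 ^ m + 1)) (\<lambda>c. \<gamma> (c div 2 ^ m + 1)) (\<lambda>c. c mod 2 ^ m) k (2 ^ m)"
  have "list_all (pred_gate (\<lambda>F. \<forall>c\<in>{..<N * 2 ^ m}. unitary (2 ^ l) (F c))) ws"
    unfolding ws_def
  proof (rule grover_power_word_unitary)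
    fix c i assume "c \<in> {..<N * 2 ^ m}" "i \<le> k"
    then show "unitary (2 ^ l) (U (c div 2 ^ m + 1) i)"
      using U by (simp add: less_mult_imp_div_less Suc_leI)
  qed
  then obtain V Q where V: "\<forall>i\<le>num_queries ws. unitary (N * 2 ^ m * 2 ^ l) (V i)" and Q: "\<forall>i. \<not> snd (Q i)"
    and circ: "\<forall>Or. unitary (2 ^ q) Or \<longrightarrow> circ (N * 2 ^ m * 2 ^ l) q V Q Or (num_queries ws) =
      block_diag (N * 2 ^ m) (2 ^ l) (\<lambda>c. eval_word (block_gate l q Or c) (2 ^ l) ws)"
    using block_word_circuit[OF ql] by blast
  have "num_queries ws = 2 * k * 2 ^ m"
    by (simp add: ws_def num_queries_grover_power_word)
  moreover have "circ (N * 2 ^ m * 2 ^ l) q V Q Or (num_queries ws) = Wop N m l (\<lambda>y. Gop l (alg l q (U y) Or k) (\<gamma> y))"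
    if Or: "unitary (2 ^ q) Or" for Or
  proof -
    have "circ (N * 2 ^ m * 2 ^ l) q V Q Or (num_queries ws) =
        block_diag (N * 2 ^ m) (2 ^ l) (\<lambda>c. eval_word (block_gate l q Or c) (2 ^ l) ws)"
      using circ Or by blast
    also have "\<dots> = Wop N m l (\<lambda>y. Gop l (alg l q (U y) Or k) (\<gamma> y))"
      unfolding ws_def by (rule Wop_eq_block_diag_eval[OF ql Or U, symmetric])
    finally show ?thesis .
  qed
  ultimately show ?thesis
    using V Q by (intro exI[of _ V] exI[of _ Q]) simp
qed

theorem lemma9:
  "\<exists>C::nat. \<forall>(N::nat) (l::nat) (m::nat) (k::nat) (q::nat)
      (U :: nat \<Rightarrow> nat \<Rightarrow> complex mat) (\<gamma> :: nat \<Rightarrow> nat).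
    (q \<le> l \<and> (\<forall>y\<in>{1..N}. (\<forall>i\<le>k. unitary (2^l) (U y i)) \<and> \<gamma> y < 2^l)) \<longrightarrow>
    (\<exists>(a::nat) (t::nat) (V :: nat \<Rightarrow> complex mat) (Q :: nat \<Rightarrow> bool \<times> bool).
       t \<le> C * k * 2^m \<and>
       (\<forall>i\<le>t. unitary (N * 2^m * 2^l * 2^a) (V i)) \<and>
       (\<forall>i\<in>{1..t}. snd (Q i) \<longrightarrow> 2 * 2^q dvd N * 2^m * 2^l * 2^a) \<and>
       (\<forall>Or. unitary (2^q) Or \<longrightarrow>
          circ (N * 2^m * 2^l * 2^a) q V Q Or t * kron (1\<^sub>m (N * 2^m * 2^l)) (ket0 (2^a))
          = kron (Wop N m l (\<lambda>y. Gop l (alg l q (U y) Or k) (\<gamma> y))) (ket0 (2^a))))"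
proof (rule exI[of _ 2], intro allI impI, goal_cases)
  case (1 N l m k q U \<gamma>)
  then have ql: "q \<le> l" and U: "\<And>y i. y \<in> {1..N} \<Longrightarrow> i \<le> k \<Longrightarrow> unitary (2 ^ l) (U y i)"
    by auto
  obtain V Q where V: "\<forall>i\<le>2 * k * 2 ^ m. unitary (N * 2 ^ m * 2 ^ l) (V i)" and Q: "\<forall>i. \<not> snd (Q i)"
    and W: "\<And>Or. unitary (2 ^ q) Or \<Longrightarrow>
      circ (N * 2 ^ m * 2 ^ l) q V Q Or (2 * k * 2 ^ m) = Wop N m l (\<lambda>y. Gop l (alg l q (U y) Or k) (\<gamma> y))"
    using Wop_circuit[where U=U and N=N and k=k and m=m and \<gamma>=\<gamma>, OF ql U] by blast
  have W_one: "circ (N * 2 ^ m * 2 ^ l) q V Q Or (2 * k * 2 ^ m) * 1\<^sub>m (N * 2 ^ m * 2 ^ l) =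
      Wop N m l (\<lambda>y. Gop l (alg l q (U y) Or k) (\<gamma> y))" if "unitary (2 ^ q) Or" for Or
    using W[OF that] Wop_eq_block_diag_eval[where U=U and N=N and k=k and m=m and \<gamma>=\<gamma>, OF ql that U] by simp
  show ?case
    by (rule exI[of _ 0], rule exI[of _ "2 * k * 2 ^ m"], rule exI[of _ V], rule exI[of _ Q])
      (simp add: V Q W_one kron_ket0_1[unfolded One_nat_def])
qed

end
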